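(* For a polygonal knot $K$, $$MD(K) \geq \min\{2\,R(K),\,MinEdge(K)\}.$$
   Context: A polygonal knot $K$ with $n$ edges is given by distinct vertices $v_1,\dots,v_n\in\mathbb{R}^3$ (indices mod $n$), with edges $e_i=[v_i,v_{i+1}]$ meeting only at the common vertex of adjacent edges. $|e_i|$ is the length of $e_i$ and $MinEdge(K)=\min_i|e_i|$. $MD(K)$ is the minimum distance between non-adjacent edges of $K$. $angle(v_i)\in[0,\pi)$ is the turning angle at $v_i$ (angle between $v_i-v_{i-1}$ and $v_{i+1}-v_i$). Let $Rad(v_i)=\dfrac{\min\{|e_{i-1}|,|e_i|\}}{2\tan(angle(v_i)/2)}$ and $MinRad(K)=\min_i Rad(v_i)$. For $x\in K$ let $d_x(y)=\Vert x-y\Vert$ for $y\in K$. A point $y$ is a turning point for $x$ if, moving along the knot, $d_x$ changes from increasing to decreasing or from decreasing to increasing at $y$. Let $DC(K)$ be the set of pairs $(x,y)$, $x\neq y$, with $x$ a turning point of $d_y$ and $y$ a turning point of $d_x$, and $dcsd(K)=\min\{\Vert x-y\Vert:(x,y)\in DC(K)\}$. The polygonal thickness radius is $R(K)=\min\{MinRad(K),dcsd(K)/2\}$. *)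

theory Defs
  imports "HOL-Analysis.Analysis" "HOL-Library.Extended_Real"
begin

text \<open>A polygonal knot with n edges is given by n and a vertex function v;
  vertex i is v (i mod n) (indices mod n).\<close>

type_synonym pt = "real ^ 3"

definition vtx :: "nat \<Rightarrow> (nat \<Rightarrow> pt) \<Rightarrow> nat \<Rightarrow> pt" where
  "vtx n v i = v (i mod n)"

definition edge :: "nat \<Rightarrow> (nat \<Rightarrow> pt) \<Rightarrow> nat \<Rightarrow> pt set" where
  "edge n v i = closed_segment (vtx n v i) (vtx n v (Suc i))"

definition edge_len :: "nat \<Rightarrow> (nat \<Rightarrow> pt) \<Rightarrow> nat \<Rightarrow> real" where
  "edge_len n v i = dist (vtx n v i) (vtx n v (Suc i))"

definition adjacent_edges :: "nat \<Rightarrow> nat \<Rightarrow> nat \<Rightarrow> bool" where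
  "adjacent_edges n i j \<longleftrightarrow> i \<noteq> j \<and> (j = Suc i mod n \<or> i = Suc j mod n)"

definition polygonal_knot :: "nat \<Rightarrow> (nat \<Rightarrow> pt) \<Rightarrow> bool" where
  "polygonal_knot n v \<longleftrightarrow> 3 \<le> n \<and> inj_on v {..<n} \<and>
     (\<forall>i<n. \<forall>j<n. i \<noteq> j \<longrightarrow>
        (if j = Suc i mod n then edge n v i \<inter> edge n v j = {vtx n v j}
         else if i = Suc j mod n then edge n v i \<inter> edge n v j = {vtx n v i}
         else edge n v i \<inter> edge n v j = {}))"

definition knot_set :: "nat \<Rightarrow> (nat \<Rightarrow> pt) \<Rightarrow> pt set" where
  "knot_set n v = (\<Union>i<n. edge n v i)"

definition MinEdge :: "nat \<Rightarrow> (nat \<Rightarrow> pt) \<Rightarrow> real" where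
  "MinEdge n v = Min (edge_len n v ` {..<n})"

text \<open>Minimum distance between non-adjacent edges (+\<infinity> if there is no such pair).\<close>
definition MD :: "nat \<Rightarrow> (nat \<Rightarrow> pt) \<Rightarrow> ereal" where
  "MD n v = (INF p \<in> {(x, y) | x y i j. i < n \<and> j < n \<and> i \<noteq> j \<and> \<not> adjacent_edges n i j
                         \<and> x \<in> edge n v i \<and> y \<in> edge n v j}.
               ereal (dist (fst p) (snd p)))"

definition vec_angle :: "pt \<Rightarrow> pt \<Rightarrow> real" where
  "vec_angle u w = arccos ((u \<bullet> w) / (norm u * norm w))"

definition turn_angle :: "nat \<Rightarrow> (nat \<Rightarrow> pt) \<Rightarrow> nat \<Rightarrow> real" where
  "turn_angle n v i = vec_angle (vtx n v i - vtx n v (i + n - 1)) (vtx n v (Suc i) - vtx n v i)"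

definition Rad :: "nat \<Rightarrow> (nat \<Rightarrow> pt) \<Rightarrow> nat \<Rightarrow> ereal" where
  "Rad n v i = (if turn_angle n v i = 0 then \<infinity>
     else ereal (min (edge_len n v (i + n - 1)) (edge_len n v i) / (2 * tan (turn_angle n v i / 2))))"

definition MinRad :: "nat \<Rightarrow> (nat \<Rightarrow> pt) \<Rightarrow> ereal" where
  "MinRad n v = Min (Rad n v ` {..<n})"

definition param :: "nat \<Rightarrow> (nat \<Rightarrow> pt) \<Rightarrow> real \<Rightarrow> pt" where
  "param n v t = (let k = nat (\<lfloor>t\<rfloor> mod int n); s = t - of_int \<lfloor>t\<rfloor>
                  in (1 - s) *\<^sub>R vtx n v k + s *\<^sub>R vtx n v (Suc k))"

definition turning_point :: "nat \<Rightarrow> (nat \<Rightarrow> pt) \<Rightarrow> pt \<Rightarrow> pt \<Rightarrow> bool" where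
  "turning_point n v x y \<longleftrightarrow> (\<exists>s. param n v s = y \<and> (\<exists>\<epsilon>>0.
     (monotone_on {s - \<epsilon>..s} (<) (<) (\<lambda>t. dist x (param n v t)) \<and>
      monotone_on {s..s + \<epsilon>} (<) (>) (\<lambda>t. dist x (param n v t))) \<or>
     (monotone_on {s - \<epsilon>..s} (<) (>) (\<lambda>t. dist x (param n v t)) \<and>
      monotone_on {s..s + \<epsilon>} (<) (<) (\<lambda>t. dist x (param n v t)))))"

definition DC :: "nat \<Rightarrow> (nat \<Rightarrow> pt) \<Rightarrow> (pt \<times> pt) set" where
  "DC n v = {(x, y). x \<in> knot_set n v \<and> y \<in> knot_set n v \<and> x \<noteq> y \<and>
                     turning_point n v y x \<and> turning_point n v x y}"

definition dcsd :: "nat \<Rightarrow> (nat \<Rightarrow> pt) \<Rightarrow> real" where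
  "dcsd n v = Inf ((\<lambda>(x, y). dist x y) ` DC n v)"

definition thickness_R :: "nat \<Rightarrow> (nat \<Rightarrow> pt) \<Rightarrow> ereal" where
  "thickness_R n v = min (MinRad n v) (ereal (dcsd n v / 2))"

end

theory Submission
  imports Defs
begin

(* Take a closest pair (x, y) of points on separated, i.e. distinct and non-adjacent, edges; it
   exists by compactness.  If x lies inside its edge, or at a vertex both of whose edges are
   separated from the edge of y, then x locally minimises the distance to y along the knot; as
   the squared distance to y along a segment is a quadratic with positive leading coefficient,
   d_y is strictly monotone on either side of x, so x is a turning point of d_y.  Otherwise x is
   a vertex P two steps away from the edge [V, Q] of y.  If the turn at V is at most pi/2 then
   |P - y| >= |P - V| >= MinEdge; otherwise, with m = min(|e_(i-1)|, |e_i|) at V,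
   |P - y| >= |P - V| sin(angle) >= m (1 + cos) / sin = m / tan(angle/2) = 2 Rad(V),
   because sin^2 = (1 - cos)(1 + cos) >= 1 + cos.  The same holds for y, and if both are
   turning points then (x, y) is in DC, whence |x - y| >= dcsd >= 2 R. *)

section \<open>Indexing of polygonal knots\<close>

lemma vtx_mod [simp]: "vtx n v (i mod n) = vtx n v i"
  by (simp add: vtx_def)

lemma vtx_add_self [simp]: "vtx n v (i + n) = vtx n v i"
  by (simp add: vtx_def)

lemma vtx_Suc_mod [simp]: "vtx n v (Suc (i mod n)) = vtx n v (Suc i)"
  by (simp add: vtx_def mod_Suc_eq)

lemma edge_mod [simp]: "edge n v (i mod n) = edge n v i"
  by (simp add: edge_def)

lemma edge_len_mod [simp]: "edge_len n v (i mod n) = edge_len n v i"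
  by (simp add: edge_len_def)

lemma Suc_pred_mod: "0 < n \<Longrightarrow> Suc ((k + n - 1) mod n) mod n = k mod n"
  by (simp add: mod_Suc_eq)

lemma pred_Suc_mod:
  assumes "0 < n" shows "(Suc k mod n + n - 1) mod n = k mod n"
proof -
  have "Suc k mod n + n - 1 = Suc k mod n + (n - 1)" using assms by simp
  then have "(Suc k mod n + n - 1) mod n = (Suc k + (n - 1)) mod n"
    by (simp add: mod_add_left_eq)
  also have "Suc k + (n - 1) = k + n" using assms by simp
  finally show ?thesis by simp
qed

lemma pred_mod_mod:
  fixes k n :: nat
  assumes "0 < n" shows "(k mod n + n - 1) mod n = (k + n - 1) mod n"
proof -
  have "k mod n + n - 1 = k mod n + (n - 1)" using assms by linarith
  moreover have "k + n - 1 = k + (n - 1)" using assms by linarith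
  ultimately show ?thesis by (simp add: mod_add_left_eq)
qed

lemma Rad_mod [simp]:
  assumes "0 < n" shows "Rad n v (i mod n) = Rad n v i"
proof -
  have "vtx n v (i mod n + n - 1) = vtx n v (i + n - 1)"
    by (metis pred_mod_mod[OF assms] vtx_mod)
  moreover have "edge_len n v (i mod n + n - 1) = edge_len n v (i + n - 1)"
    by (metis pred_mod_mod[OF assms] edge_len_mod)
  ultimately show ?thesis
    unfolding Rad_def turn_angle_def by simp
qed

lemma polygonal_knot_ge_3: "polygonal_knot n v \<Longrightarrow> 3 \<le> n"
  by (simp add: polygonal_knot_def)

lemma polygonal_knot_vtx_Suc_neq:
  assumes "polygonal_knot n v" shows "vtx n v i \<noteq> vtx n v (Suc i)"
proof
  assume "vtx n v i = vtx n v (Suc i)"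
  moreover have "inj_on v {..<n}" and "3 \<le> n"
    using assms by (simp_all add: polygonal_knot_def)
  ultimately have "i mod n = Suc i mod n"
    unfolding vtx_def by (auto dest: inj_onD)
  then show False
    using \<open>3 \<le> n\<close> by (simp add: mod_Suc split: if_splits)
qed

definition separated_edges :: "nat \<Rightarrow> nat \<Rightarrow> nat \<Rightarrow> bool" where
  "separated_edges n i j \<longleftrightarrow> i \<noteq> j \<and> \<not> adjacent_edges n i j"

lemma separated_edges_commute: "separated_edges n i j \<longleftrightarrow> separated_edges n j i"
  unfolding separated_edges_def adjacent_edges_def by auto

lemma polygonal_knot_separated_edges_disjoint:
  assumes "polygonal_knot n v" "i < n" "j < n" "separated_edges n i j"
  shows "edge n v i \<inter> edge n v j = {}"
proof -
  have "i \<noteq> j" "j \<noteq> Suc i mod n" "i \<noteq> Suc j mod n"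
    using assms(4) unfolding separated_edges_def adjacent_edges_def by auto
  moreover have "\<forall>i<n. \<forall>j<n. i \<noteq> j \<longrightarrow> j \<noteq> Suc i mod n \<longrightarrow> i \<noteq> Suc j mod n \<longrightarrow>
      edge n v i \<inter> edge n v j = {}"
    using assms(1) unfolding polygonal_knot_def by (auto split: if_splits)
  ultimately show ?thesis using assms(2,3) by blast
qed

lemma vertex_two_apart_if_separated_neq:
  assumes "3 \<le> n" "b < n" "k < n"
    and "separated_edges n ((k + n - 1) mod n) b \<noteq> separated_edges n k b"
  shows "k = (b + 2) mod n \<or> k = (b + n - 1) mod n"
proof -
  define p where "p = (k + n - 1) mod n"
  have "0 < n" "p < n" using assms(1) unfolding p_def by auto
  have Suc_p: "Suc p mod n = k"
    using Suc_pred_mod[OF \<open>0 < n\<close>, of k] assms(3) unfolding p_def by simp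
  have Suc_mod_inj: "i = j" if "Suc i mod n = Suc j mod n" "i < n" "j < n" for i j
    using that pred_Suc_mod[OF \<open>0 < n\<close>, of i] pred_Suc_mod[OF \<open>0 < n\<close>, of j] by simp
  have Suc_mod_neq: "Suc i mod n \<noteq> i" if "i < n" for i
    using that \<open>3 \<le> n\<close> by (auto simp: mod_Suc)
  have "k = Suc (Suc b) mod n \<or> Suc k mod n = b"
    using assms(4) Suc_mod_neq[OF \<open>b < n\<close>] Suc_mod_neq[OF \<open>p < n\<close>] Suc_mod_inj[of p b]
      \<open>p < n\<close> \<open>b < n\<close> Suc_p
    unfolding separated_edges_def adjacent_edges_def p_def[symmetric]
    by (auto simp: mod_Suc_eq)
  then show ?thesis
    using pred_Suc_mod[OF \<open>0 < n\<close>, of k] assms(3)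
    by (auto simp: mod_Suc_eq numeral_2_eq_2)
qed

section \<open>Distance along a line\<close>

lemma quadratic_strict_mono_on:
  fixes A B lo hi :: real
  assumes "0 < A" and min_lo: "\<forall>t\<in>{lo..hi}. A * lo\<^sup>2 + B * lo \<le> A * t\<^sup>2 + B * t"
  shows "strict_mono_on {lo..hi} (\<lambda>t. A * t\<^sup>2 + B * t)"
proof (rule strict_mono_onI)
  fix t1 t2 assume t: "t1 \<in> {lo..hi}" "t2 \<in> {lo..hi}" "t1 < t2"
  \<comment> \<open>Minimality at lo, tested at the midpoint u of lo and t2, puts the apex -B/(2A)
    at or left of (lo + u)/2 < (t1 + t2)/2.\<close>
  define u where "u = (lo + t2) / 2"
  have "u \<in> {lo..hi}" "lo < u" using t unfolding u_def by auto
  with min_lo have "0 \<le> (u - lo) * (A * (u + lo) + B)"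
    by (auto simp: algebra_simps power2_eq_square)
  with \<open>lo < u\<close> have "0 \<le> A * (u + lo) + B"
    by (simp add: zero_le_mult_iff)
  moreover have "u + lo < t1 + t2"
    using t by (auto simp: u_def field_simps)
  then have "A * (u + lo) < A * (t1 + t2)"
    using \<open>0 < A\<close> by simp
  ultimately have "0 < (t2 - t1) * (A * (t1 + t2) + B)"
    using t by simp
  then show "A * t1\<^sup>2 + B * t1 < A * t2\<^sup>2 + B * t2"
    by (simp add: algebra_simps power2_eq_square)
qed

lemma power2_norm_add_scaleR:
  fixes a b :: "'a::real_inner"
  shows "(norm (a + t *\<^sub>R b))\<^sup>2 = (norm a)\<^sup>2 + 2 * t * (a \<bullet> b) + t\<^sup>2 * (norm b)\<^sup>2"
  unfolding power2_norm_eq_inner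
  by (simp add: inner_add_left inner_add_right inner_commute algebra_simps power2_eq_square)

lemma dist_line_strict_mono_on:
  fixes c w y :: "'a::real_inner"
  assumes "w \<noteq> 0" and "\<forall>t\<in>{lo..hi}. dist y (c + lo *\<^sub>R w) \<le> dist y (c + t *\<^sub>R w)"
  shows "strict_mono_on {lo..hi} (\<lambda>t. dist y (c + t *\<^sub>R w))"
proof -
  define A where "A = (norm w)\<^sup>2"
  define B where "B = 2 * ((c - y) \<bullet> w)"
  have sq: "(dist y (c + t *\<^sub>R w))\<^sup>2 = A * t\<^sup>2 + B * t + (norm (c - y))\<^sup>2" for t
  proof -
    have "dist y (c + t *\<^sub>R w) = norm ((c - y) + t *\<^sub>R w)"
      by (simp add: dist_norm norm_minus_commute algebra_simps)
    then show ?thesis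
      by (simp only: power2_norm_add_scaleR) (simp add: A_def B_def algebra_simps)
  qed
  have "0 < A" using assms(1) unfolding A_def by simp
  moreover have "\<forall>t\<in>{lo..hi}. A * lo\<^sup>2 + B * lo \<le> A * t\<^sup>2 + B * t"
  proof
    fix t assume "t \<in> {lo..hi}"
    with assms(2) have "(dist y (c + lo *\<^sub>R w))\<^sup>2 \<le> (dist y (c + t *\<^sub>R w))\<^sup>2"
      by (simp add: power_mono)
    then show "A * lo\<^sup>2 + B * lo \<le> A * t\<^sup>2 + B * t" by (simp add: sq)
  qed
  ultimately have mono: "strict_mono_on {lo..hi} (\<lambda>t. A * t\<^sup>2 + B * t)"
    by (rule quadratic_strict_mono_on)
  show ?thesis
  proof (rule strict_mono_onI)
    fix r s assume "r \<in> {lo..hi}" "s \<in> {lo..hi}" "r < s"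
    with mono have "(dist y (c + r *\<^sub>R w))\<^sup>2 < (dist y (c + s *\<^sub>R w))\<^sup>2"
      by (simp add: sq strict_mono_on_def)
    then show "dist y (c + r *\<^sub>R w) < dist y (c + s *\<^sub>R w)"
      by (rule power_less_imp_less_base) simp
  qed
qed

lemma dist_line_strict_antimono_on:
  fixes c w y :: "'a::real_inner"
  assumes "w \<noteq> 0" and min_hi: "\<forall>t\<in>{lo..hi}. dist y (c + hi *\<^sub>R w) \<le> dist y (c + t *\<^sub>R w)"
  shows "strict_antimono_on {lo..hi} (\<lambda>t. dist y (c + t *\<^sub>R w))"
proof -
  have mono: "strict_mono_on {-hi..-lo} (\<lambda>t. dist y (c + t *\<^sub>R - w))"
  proof (rule dist_line_strict_mono_on)
    show "- w \<noteq> 0" using assms(1) by simp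
    show "\<forall>t\<in>{-hi..-lo}. dist y (c + (-hi) *\<^sub>R - w) \<le> dist y (c + t *\<^sub>R - w)"
    proof
      fix t assume "t \<in> {-hi..-lo}"
      then have "-t \<in> {lo..hi}" by auto
      from min_hi[rule_format, OF this] show "dist y (c + (-hi) *\<^sub>R - w) \<le> dist y (c + t *\<^sub>R - w)" by simp
    qed
  qed
  show ?thesis
  proof (rule monotone_onI)
    fix r s assume "r \<in> {lo..hi}" "s \<in> {lo..hi}" "r < s"
    then have "-s \<in> {-hi..-lo}" "-r \<in> {-hi..-lo}" "-s < -r" by auto
    then have "dist y (c + (-s) *\<^sub>R - w) < dist y (c + (-r) *\<^sub>R - w)"
      by (rule strict_mono_onD[OF mono])
    then show "dist y (c + s *\<^sub>R w) < dist y (c + r *\<^sub>R w)" by simp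
  qed
qed

section \<open>Turning points\<close>

lemma param_eq_on_edge:
  assumes "0 < n" and "t \<in> {real m..real m + 1}"
  shows "param n v t = vtx n v m + (t - real m) *\<^sub>R (vtx n v (Suc m) - vtx n v m)"
proof (cases "t = real m + 1")
  case True
  then have "\<lfloor>t\<rfloor> = int (Suc m)" by simp
  moreover have "nat ((int m + 1) mod int n) = Suc m mod n"
    by (simp add: nat_mod_distrib nat_add_distrib)
  ultimately show ?thesis
    using True unfolding param_def Let_def by simp
next
  case False
  with assms(2) have "\<lfloor>t\<rfloor> = int m" by (simp add: floor_eq_iff)
  moreover have "nat (int m mod int n) = m mod n"
    by (simp add: nat_mod_distrib)
  ultimately show ?thesis
    unfolding param_def Let_def by (simp add: algebra_simps)
qed

lemma param_in_edge:
  assumes "0 < n" and "t \<in> {real m..real m + 1}"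
  shows "param n v t \<in> edge n v m"
proof -
  have "param n v t = (1 - (t - real m)) *\<^sub>R vtx n v m + (t - real m) *\<^sub>R vtx n v (Suc m)"
    unfolding param_eq_on_edge[OF assms] by (simp add: algebra_simps)
  then show ?thesis
    using assms(2) unfolding edge_def in_segment by (intro exI[of _ "t - real m"]) auto
qed

lemma param_affine_on_edge:
  assumes "0 < n"
  obtains c where "\<forall>t\<in>{real m..real m + 1}. param n v t = c + t *\<^sub>R (vtx n v (Suc m) - vtx n v m)"
proof
  show "\<forall>t\<in>{real m..real m + 1}. param n v t =
          (vtx n v m - real m *\<^sub>R (vtx n v (Suc m) - vtx n v m)) + t *\<^sub>R (vtx n v (Suc m) - vtx n v m)"
    using param_eq_on_edge[OF assms] by (simp add: algebra_simps)
qed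

lemma turning_point_if_local_min:
  assumes "0 < n" and "0 < \<epsilon>"
    and left: "{s - \<epsilon>..s} \<subseteq> {real l..real l + 1}" "vtx n v l \<noteq> vtx n v (Suc l)"
    and right: "{s..s + \<epsilon>} \<subseteq> {real r..real r + 1}" "vtx n v r \<noteq> vtx n v (Suc r)"
    and local_min: "\<forall>t\<in>{s - \<epsilon>..s + \<epsilon>}. dist y (param n v s) \<le> dist y (param n v t)"
  shows "turning_point n v y (param n v s)"
proof -
  define w1 where "w1 = vtx n v (Suc l) - vtx n v l"
  define w2 where "w2 = vtx n v (Suc r) - vtx n v r"
  obtain c1 where "\<forall>t\<in>{real l..real l + 1}. param n v t = c1 + t *\<^sub>R w1"
    unfolding w1_def by (rule param_affine_on_edge[OF assms(1)])
  with left(1) have c1: "param n v t = c1 + t *\<^sub>R w1" if "t \<in> {s - \<epsilon>..s}" for t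
    using that by blast
  obtain c2 where "\<forall>t\<in>{real r..real r + 1}. param n v t = c2 + t *\<^sub>R w2"
    unfolding w2_def by (rule param_affine_on_edge[OF assms(1)])
  with right(1) have c2: "param n v t = c2 + t *\<^sub>R w2" if "t \<in> {s..s + \<epsilon>}" for t
    using that by blast
  have s_mem: "s \<in> {s - \<epsilon>..s}" "s \<in> {s..s + \<epsilon>}" using \<open>0 < \<epsilon>\<close> by auto
  have min_left: "dist y (param n v s) \<le> dist y (param n v t)" if "t \<in> {s - \<epsilon>..s}" for t
    using local_min that \<open>0 < \<epsilon>\<close> by auto
  have min_right: "dist y (param n v s) \<le> dist y (param n v t)" if "t \<in> {s..s + \<epsilon>}" for t
    using local_min that \<open>0 < \<epsilon>\<close> by auto
  have "strict_antimono_on {s - \<epsilon>..s} (\<lambda>t. dist y (c1 + t *\<^sub>R w1))"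
  proof (rule dist_line_strict_antimono_on)
    show "w1 \<noteq> 0" using left(2) unfolding w1_def by simp
    show "\<forall>t\<in>{s - \<epsilon>..s}. dist y (c1 + s *\<^sub>R w1) \<le> dist y (c1 + t *\<^sub>R w1)"
      using min_left c1 s_mem(1) by simp
  qed
  then have "strict_antimono_on {s - \<epsilon>..s} (\<lambda>t. dist y (param n v t))"
    by (simp add: monotone_on_def c1)
  moreover have "strict_mono_on {s..s + \<epsilon>} (\<lambda>t. dist y (c2 + t *\<^sub>R w2))"
  proof (rule dist_line_strict_mono_on)
    show "w2 \<noteq> 0" using right(2) unfolding w2_def by simp
    show "\<forall>t\<in>{s..s + \<epsilon>}. dist y (c2 + s *\<^sub>R w2) \<le> dist y (c2 + t *\<^sub>R w2)"
      using min_right c2 s_mem(2) by simp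
  qed
  then have "strict_mono_on {s..s + \<epsilon>} (\<lambda>t. dist y (param n v t))"
    by (simp add: monotone_on_def c2)
  ultimately show ?thesis
    unfolding turning_point_def using \<open>0 < \<epsilon>\<close> by blast
qed

lemma turning_point_at_vertex:
  assumes K: "polygonal_knot n v" and "1 \<le> k"
    and local_min: "\<forall>z \<in> edge n v (k - 1) \<union> edge n v k. dist y (vtx n v k) \<le> dist y z"
  shows "turning_point n v y (vtx n v k)"
proof -
  have "0 < n" using polygonal_knot_ge_3[OF K] by simp
  have k: "real (k - 1) = real k - 1" using \<open>1 \<le> k\<close> by simp
  have vtx_k: "param n v (real k) = vtx n v k"
    using param_eq_on_edge[OF \<open>0 < n\<close>, of "real k" k] by simp
  have "turning_point n v y (param n v (real k))"
  proof (rule turning_point_if_local_min[OF \<open>0 < n\<close>, of 1 "real k" "k - 1" v k])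
    show "vtx n v (k - 1) \<noteq> vtx n v (Suc (k - 1))" "vtx n v k \<noteq> vtx n v (Suc k)"
      using polygonal_knot_vtx_Suc_neq[OF K] by blast+
    have "param n v t \<in> edge n v (k - 1) \<union> edge n v k" if "t \<in> {real k - 1..real k + 1}" for t
      using that param_in_edge[OF \<open>0 < n\<close>, of t "k - 1"] param_in_edge[OF \<open>0 < n\<close>, of t k] k
      by (cases "t \<le> real k") auto
    then show "\<forall>t\<in>{real k - 1..real k + 1}. dist y (param n v (real k)) \<le> dist y (param n v t)"
      using local_min vtx_k by auto
  qed (use k in auto)
  then show ?thesis using vtx_k by simp
qed

lemma turning_point_inside_edge:
  assumes K: "polygonal_knot n v" and "0 < \<sigma>" "\<sigma> < 1"
    and x: "x = vtx n v k + \<sigma> *\<^sub>R (vtx n v (Suc k) - vtx n v k)"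
    and local_min: "\<forall>z \<in> edge n v k. dist y x \<le> dist y z"
  shows "turning_point n v y x"
proof -
  have "0 < n" using polygonal_knot_ge_3[OF K] by simp
  define \<epsilon> where "\<epsilon> = min \<sigma> (1 - \<sigma>)"
  have "0 < \<epsilon>" using assms(2,3) unfolding \<epsilon>_def by simp
  have x_param: "param n v (real k + \<sigma>) = x"
    using param_eq_on_edge[OF \<open>0 < n\<close>, of "real k + \<sigma>" k] assms(2,3) x by simp
  have nbhd: "{real k + \<sigma> - \<epsilon>..real k + \<sigma> + \<epsilon>} \<subseteq> {real k..real k + 1}"
    unfolding \<epsilon>_def by auto
  have "turning_point n v y (param n v (real k + \<sigma>))"
  proof (rule turning_point_if_local_min[OF \<open>0 < n\<close> \<open>0 < \<epsilon>\<close>, of "real k + \<sigma>" k v k])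
    show "\<forall>t\<in>{real k + \<sigma> - \<epsilon>..real k + \<sigma> + \<epsilon>}. dist y (param n v (real k + \<sigma>)) \<le> dist y (param n v t)"
      using nbhd param_in_edge[OF \<open>0 < n\<close>] local_min x_param by blast
  qed (use nbhd polygonal_knot_vtx_Suc_neq[OF K] in auto)
  then show ?thesis using x_param by simp
qed

section \<open>Distance across a vertex\<close>

abbreviation MD_lower_bound :: "nat \<Rightarrow> (nat \<Rightarrow> pt) \<Rightarrow> ereal" where
  "MD_lower_bound n v \<equiv> min (2 * thickness_R n v) (ereal (MinEdge n v))"

lemma MD_lower_bound_le_edge_len:
  assumes "0 < n" and "edge_len n v i \<le> d"
  shows "MD_lower_bound n v \<le> ereal d"
proof -
  have "MinEdge n v \<le> edge_len n v (i mod n)"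
    unfolding MinEdge_def using assms(1) by (intro Min_le) (auto intro!: image_eqI[where x = "i mod n"])
  with assms(2) show ?thesis
    by (simp add: min.coboundedI2)
qed

lemma MD_lower_bound_le_dcsd:
  assumes "dcsd n v \<le> d"
  shows "MD_lower_bound n v \<le> ereal d"
proof -
  have "2 * thickness_R n v \<le> 2 * ereal (dcsd n v / 2)"
    unfolding thickness_R_def by (intro ereal_mult_left_mono) auto
  also have "\<dots> = ereal (dcsd n v)" by simp
  finally show ?thesis
    using assms by (meson ereal_less_eq(3) min.coboundedI1 order_trans)
qed

lemma MD_lower_bound_le_Rad:
  assumes "0 < n" and "2 * Rad n v i \<le> ereal d"
  shows "MD_lower_bound n v \<le> ereal d"
proof -
  have "MinRad n v \<le> Rad n v (i mod n)"
    unfolding MinRad_def using assms(1) by (intro Min_le) (auto intro!: image_eqI[where x = "i mod n"])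
  then have "2 * thickness_R n v \<le> 2 * Rad n v i"
    unfolding thickness_R_def using assms(1) by (intro ereal_mult_left_mono min.coboundedI1) auto
  with assms(2) show ?thesis
    by (meson min.coboundedI1 order_trans)
qed

lemma norm_add_scaleR_ge:
  fixes a b :: "'a::real_inner"
  shows "norm a * sqrt (1 - ((a \<bullet> b) / (norm a * norm b))\<^sup>2) \<le> norm (a + t *\<^sub>R b)"
proof (cases "a = 0 \<or> b = 0")
  case True
  then show ?thesis by auto
next
  case False
  define c where "c = (a \<bullet> b) / (norm a * norm b)"
  have "\<bar>a \<bullet> b\<bar>\<^sup>2 \<le> (norm a * norm b)\<^sup>2"
    by (rule power_mono[OF Cauchy_Schwarz_ineq2]) simp
  with False have "c\<^sup>2 \<le> 1"
    unfolding c_def by (simp add: power_divide)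
  \<comment> \<open>Lagrange's identity; the last square vanishes at the foot of the perpendicular.\<close>
  have "(norm b)\<^sup>2 * (norm (a + t *\<^sub>R b))\<^sup>2 = (norm a * norm b)\<^sup>2 - (a \<bullet> b)\<^sup>2 + (t * (norm b)\<^sup>2 + a \<bullet> b)\<^sup>2"
    unfolding power2_norm_add_scaleR by (simp add: algebra_simps power2_eq_square)
  moreover have "(norm a * norm b)\<^sup>2 - (a \<bullet> b)\<^sup>2 = (norm b)\<^sup>2 * (norm a * sqrt (1 - c\<^sup>2))\<^sup>2"
    using False \<open>c\<^sup>2 \<le> 1\<close> unfolding c_def by (simp add: power_mult_distrib power_divide field_simps)
  ultimately have "(norm b)\<^sup>2 * (norm a * sqrt (1 - c\<^sup>2))\<^sup>2 \<le> (norm b)\<^sup>2 * (norm (a + t *\<^sub>R b))\<^sup>2"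
    by simp
  then have "(norm a * sqrt (1 - c\<^sup>2))\<^sup>2 \<le> (norm (a + t *\<^sub>R b))\<^sup>2"
    using False by simp
  then show ?thesis
    unfolding c_def[symmetric] by (rule power2_le_imp_le) simp
qed

lemma div_tan_half_arccos_le:
  fixes c m r :: real
  assumes "-1 \<le> c" "c \<le> 0" "0 \<le> m" "m \<le> r"
  shows "m / tan (arccos c / 2) \<le> r * sqrt (1 - c\<^sup>2)"
proof -
  have tan: "tan (arccos c / 2) = sqrt (1 - c\<^sup>2) / (c + 1)"
    using assms(1,2) by (simp add: tan_half[of "arccos c / 2"] sin_arccos)
  show ?thesis
  proof (cases "c = -1")
    case True
    \<comment> \<open>A full U-turn: here tan (pi/2) = 0 in HOL, so the left-hand side is 0.\<close>
    then show ?thesis using assms by (simp add: tan)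
  next
    case False
    define s where "s = sqrt (1 - c\<^sup>2)"
    have "0 < 1 - c\<^sup>2"
      using assms(1,2) False by (simp add: abs_square_less_1)
    then have "0 < s" "s\<^sup>2 = 1 - c\<^sup>2" unfolding s_def by simp_all
    have "m * (c + 1) \<le> r * (c + 1)"
      using assms by (intro mult_right_mono) auto
    also have "\<dots> \<le> r * ((1 - c) * (1 + c))"
    proof (rule mult_left_mono)
      have "c * (1 + c) \<le> 0" using assms(1,2) by (simp add: mult_nonpos_nonneg)
      then show "c + 1 \<le> (1 - c) * (1 + c)" by (simp add: algebra_simps)
    qed (use assms in simp)
    also have "\<dots> = r * s\<^sup>2"
      by (subst \<open>s\<^sup>2 = 1 - c\<^sup>2\<close>) (simp add: algebra_simps power2_eq_square)
    finally show ?thesis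
      using \<open>0 < s\<close> unfolding tan s_def[symmetric] by (simp add: divide_le_eq power2_eq_square mult_ac)
  qed
qed

lemma dist_across_vertex:
  fixes P V Q y :: pt
  assumes y: "y \<in> closed_segment V Q" and "0 \<le> m" "m \<le> dist P V"
  shows "dist P V \<le> dist P y \<or>
    (vec_angle (V - Q) (P - V) \<noteq> 0 \<and> m / tan (vec_angle (V - Q) (P - V) / 2) \<le> dist P y)"
proof -
  define a where "a = P - V"
  define b where "b = V - Q"
  define c where "c = (a \<bullet> b) / (norm a * norm b)"
  obtain t where "0 \<le> t" "t \<le> 1" and y_eq: "y = (1 - t) *\<^sub>R V + t *\<^sub>R Q"
    using y by (auto simp: in_segment)
  have "P - y = a + t *\<^sub>R b"
    unfolding y_eq a_def b_def by (simp add: algebra_simps)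
  then have Py: "dist P y = norm (a + t *\<^sub>R b)"
    by (simp add: dist_norm)
  have PV: "dist P V = norm a"
    unfolding a_def by (simp add: dist_norm)
  show ?thesis
  proof (cases "0 \<le> a \<bullet> b")
    case True
    then have "(norm a)\<^sup>2 \<le> (norm (a + t *\<^sub>R b))\<^sup>2"
      using \<open>0 \<le> t\<close> unfolding power2_norm_add_scaleR by simp
    then have "norm a \<le> norm (a + t *\<^sub>R b)"
      by (rule power2_le_imp_le) simp
    then show ?thesis
      unfolding Py PV by simp
  next
    case False
    then have "a \<noteq> 0" "b \<noteq> 0" by auto
    then have "0 < norm a * norm b" by simp
    have "\<bar>a \<bullet> b\<bar> \<le> norm a * norm b" by (rule Cauchy_Schwarz_ineq2)
    then have "-1 \<le> c"
      unfolding c_def using \<open>0 < norm a * norm b\<close> by (simp add: le_divide_eq abs_le_iff)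
    have "c < 0"
      unfolding c_def using False \<open>0 < norm a * norm b\<close> by (simp add: divide_neg_pos)
    have angle: "vec_angle (V - Q) (P - V) = arccos c"
      unfolding vec_angle_def c_def a_def[symmetric] b_def[symmetric] by (simp add: inner_commute mult.commute)
    have "arccos c \<noteq> 0"
      using arccos_eq_0_iff[of c] \<open>-1 \<le> c\<close> \<open>c < 0\<close> by simp
    moreover have "m / tan (arccos c / 2) \<le> norm a * sqrt (1 - c\<^sup>2)"
      using div_tan_half_arccos_le[OF \<open>-1 \<le> c\<close> _ \<open>0 \<le> m\<close>] \<open>c < 0\<close> \<open>m \<le> dist P V\<close> PV by simp
    moreover have "norm a * sqrt (1 - c\<^sup>2) \<le> dist P y"
      unfolding Py c_def by (rule norm_add_scaleR_ge)
    ultimately show ?thesis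
      unfolding angle by simp
  qed
qed

lemma vec_angle_reverse: "vec_angle (V - Q) (P - V) = vec_angle (V - P) (Q - V)"
proof -
  have "(V - Q) \<bullet> (P - V) = (- (Q - V)) \<bullet> (- (V - P))" by simp
  also have "\<dots> = (V - P) \<bullet> (Q - V)"
    by (simp only: inner_minus_left inner_minus_right minus_minus inner_commute)
  finally show ?thesis
    unfolding vec_angle_def by (simp add: norm_minus_commute mult.commute)
qed

lemma MD_lower_bound_le_dist_across_vertex:
  assumes K: "polygonal_knot n v"
    and PQ: "(P = vtx n v (k + n - 1) \<and> Q = vtx n v (Suc k)) \<or> (P = vtx n v (Suc k) \<and> Q = vtx n v (k + n - 1))"
    and y: "y \<in> closed_segment (vtx n v k) Q"
  shows "MD_lower_bound n v \<le> ereal (dist P y)"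
proof -
  have "0 < n" using polygonal_knot_ge_3[OF K] by simp
  define V where "V = vtx n v k"
  define m where "m = min (edge_len n v (k + n - 1)) (edge_len n v k)"
  have "Suc (k + n - 1) = k + n" using \<open>0 < n\<close> by simp
  then have lens: "edge_len n v (k + n - 1) = dist (vtx n v (k + n - 1)) V"
      "edge_len n v k = dist V (vtx n v (Suc k))"
    unfolding edge_len_def V_def by simp_all
  then have PV: "dist P V = edge_len n v (k + n - 1) \<or> dist P V = edge_len n v k"
    using PQ by (auto simp: dist_commute)
  have angle: "turn_angle n v k = vec_angle (V - Q) (P - V)"
    using PQ unfolding turn_angle_def V_def by (auto simp: vec_angle_reverse)
  have "0 \<le> m" "m \<le> dist P V"
    using PV unfolding m_def edge_len_def by auto
  from dist_across_vertex[OF y[folded V_def] this] show ?thesis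
  proof
    assume "dist P V \<le> dist P y"
    with PV show ?thesis
      using MD_lower_bound_le_edge_len[OF \<open>0 < n\<close>] by auto
  next
    assume "vec_angle (V - Q) (P - V) \<noteq> 0 \<and> m / tan (vec_angle (V - Q) (P - V) / 2) \<le> dist P y"
    then have "2 * Rad n v k \<le> ereal (dist P y)"
      unfolding Rad_def angle m_def[symmetric] by simp
    then show ?thesis
      by (rule MD_lower_bound_le_Rad[OF \<open>0 < n\<close>])
  qed
qed

lemma MD_lower_bound_le_dist_vertex_two_apart:
  assumes K: "polygonal_knot n v" and y: "y \<in> edge n v j"
    and x: "x = vtx n v (j + 2) \<or> x = vtx n v (j + n - 1)"
  shows "MD_lower_bound n v \<le> ereal (dist x y)"
  using x
proof
  assume "x = vtx n v (j + 2)"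
  moreover have "vtx n v (Suc j + n - 1) = vtx n v j"
    by (metis add_Suc diff_Suc_1 vtx_add_self)
  ultimately show ?thesis
    using MD_lower_bound_le_dist_across_vertex[OF K, of x "Suc j" "vtx n v j" y] y
    by (simp add: edge_def closed_segment_commute numeral_2_eq_2)
next
  assume "x = vtx n v (j + n - 1)"
  then show ?thesis
    using MD_lower_bound_le_dist_across_vertex[OF K, of x j "vtx n v (Suc j)" y] y
    by (simp add: edge_def)
qed

section \<open>Closest pairs of separated edges\<close>

lemma vertex_turning_point_or_bound:
  assumes K: "polygonal_knot n v" and "b < n" "k < n" and y: "y \<in> edge n v b"
    and closest: "\<forall>i<n. separated_edges n i b \<longrightarrow> (\<forall>z\<in>edge n v i. dist y (vtx n v k) \<le> dist y z)"
    and separated: "separated_edges n ((k + n - 1) mod n) b \<or> separated_edges n k b"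
  shows "turning_point n v y (vtx n v k) \<or> MD_lower_bound n v \<le> ereal (dist (vtx n v k) y)"
proof (cases "separated_edges n ((k + n - 1) mod n) b \<and> separated_edges n k b")
  case True
  have "0 < n" using polygonal_knot_ge_3[OF K] by simp
  \<comment> \<open>Vertex k + n is the same point, and its preceding edge k + n - 1 needs no truncated
    subtraction.\<close>
  have "\<forall>z \<in> edge n v (k + n - 1) \<union> edge n v (k + n). dist y (vtx n v (k + n)) \<le> dist y z"
    using closest True \<open>k < n\<close> \<open>0 < n\<close>
    by (metis Un_iff edge_mod mod_less mod_less_divisor vtx_add_self mod_add_self2)
  then have "turning_point n v y (vtx n v (k + n))"
    using turning_point_at_vertex[OF K, of "k + n"] \<open>0 < n\<close> by simp
  then show ?thesis by simp
next
  case False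
  with separated have "k = (b + 2) mod n \<or> k = (b + n - 1) mod n"
    using vertex_two_apart_if_separated_neq polygonal_knot_ge_3[OF K] \<open>b < n\<close> \<open>k < n\<close> by blast
  then have "vtx n v k = vtx n v (b + 2) \<or> vtx n v k = vtx n v (b + n - 1)"
    by (metis vtx_mod)
  then show ?thesis
    using MD_lower_bound_le_dist_vertex_two_apart[OF K y] by blast
qed

lemma closest_point_turning_point_or_bound:
  assumes K: "polygonal_knot n v" and "a < n" "b < n" "separated_edges n a b"
    and x: "x \<in> edge n v a" and y: "y \<in> edge n v b"
    and closest: "\<forall>i<n. separated_edges n i b \<longrightarrow> (\<forall>z\<in>edge n v i. dist y x \<le> dist y z)"
  shows "turning_point n v y x \<or> MD_lower_bound n v \<le> ereal (dist x y)"
proof -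
  have "0 < n" using polygonal_knot_ge_3[OF K] by simp
  obtain \<sigma> where "0 \<le> \<sigma>" "\<sigma> \<le> 1" and x_eq: "x = vtx n v a + \<sigma> *\<^sub>R (vtx n v (Suc a) - vtx n v a)"
    using x unfolding edge_def in_segment by (auto simp: algebra_simps)
  consider "0 < \<sigma> \<and> \<sigma> < 1" | "\<sigma> = 0" | "\<sigma> = 1"
    using \<open>0 \<le> \<sigma>\<close> \<open>\<sigma> \<le> 1\<close> by linarith
  then show ?thesis
  proof cases
    case 1
    then show ?thesis
      using turning_point_inside_edge[OF K _ _ x_eq] closest assms(2,4) by blast
  next
    case 2
    then have "x = vtx n v a" using x_eq by simp
    then show ?thesis
      using vertex_turning_point_or_bound[OF K \<open>b < n\<close> \<open>a < n\<close> y] closest assms(4) by simp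
  next
    case 3
    then have "x = vtx n v (Suc a mod n)" using x_eq by simp
    moreover have "(Suc a mod n + n - 1) mod n = a"
      using pred_Suc_mod[OF \<open>0 < n\<close>] \<open>a < n\<close> by simp
    ultimately show ?thesis
      using vertex_turning_point_or_bound[OF K \<open>b < n\<close> _ y, of "Suc a mod n"] closest assms(4) \<open>0 < n\<close>
      by simp
  qed
qed

lemma dcsd_le_dist: "(x, y) \<in> DC n v \<Longrightarrow> dcsd n v \<le> dist x y"
  unfolding dcsd_def by (rule cInf_lower) (force, auto intro: bdd_belowI[of _ 0])

definition separated_pairs :: "nat \<Rightarrow> (nat \<Rightarrow> pt) \<Rightarrow> (pt \<times> pt) set" where
  "separated_pairs n v =
     (\<Union>(i, j) \<in> {(i, j). i < n \<and> j < n \<and> separated_edges n i j}. edge n v i \<times> edge n v j)"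

lemma MD_eq_INF_separated_pairs:
  "MD n v = (INF p \<in> separated_pairs n v. ereal (dist (fst p) (snd p)))"
proof -
  have "{(x, y) | x y i j. i < n \<and> j < n \<and> i \<noteq> j \<and> \<not> adjacent_edges n i j
           \<and> x \<in> edge n v i \<and> y \<in> edge n v j} = separated_pairs n v"
    unfolding separated_pairs_def separated_edges_def by blast
  then show ?thesis unfolding MD_def by simp
qed

lemma compact_separated_pairs: "compact (separated_pairs n v)"
proof -
  have "finite {(i, j). i < n \<and> j < n \<and> separated_edges n i j}"
    by (rule finite_subset[of _ "{..<n} \<times> {..<n}"]) auto
  then show ?thesis
    unfolding separated_pairs_def edge_def
    by (intro compact_UN) (auto intro!: compact_Times simp: compact_segment)
qed

lemma MD_lower_bound_le_closest_pair:
  assumes K: "polygonal_knot n v" and "a < n" "b < n" "separated_edges n a b"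
    and x: "x \<in> edge n v a" and y: "y \<in> edge n v b"
    and closest: "\<forall>p \<in> separated_pairs n v. dist x y \<le> dist (fst p) (snd p)"
  shows "MD_lower_bound n v \<le> ereal (dist x y)"
proof -
  have "turning_point n v y x \<or> MD_lower_bound n v \<le> ereal (dist x y)"
  proof (rule closest_point_turning_point_or_bound[OF K assms(2-4) x y], intro allI impI ballI)
    fix i z assume "i < n" "separated_edges n i b" "z \<in> edge n v i"
    then have "(z, y) \<in> separated_pairs n v" using y \<open>b < n\<close> unfolding separated_pairs_def by blast
    then show "dist y x \<le> dist y z" using closest by (force simp: dist_commute)
  qed
  moreover have "separated_edges n b a"
    using assms(4) separated_edges_commute by blast
  then have "turning_point n v x y \<or> MD_lower_bound n v \<le> ereal (dist y x)"
  proof (rule closest_point_turning_point_or_bound[OF K assms(3,2) _ y x], intro allI impI ballI)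
    fix j z assume "j < n" "separated_edges n j a" "z \<in> edge n v j"
    then have "(x, z) \<in> separated_pairs n v"
      using x \<open>a < n\<close> separated_edges_commute unfolding separated_pairs_def by blast
    then show "dist x y \<le> dist x z" using closest by force
  qed
  moreover have "MD_lower_bound n v \<le> ereal (dist x y)" if "turning_point n v y x" "turning_point n v x y"
  proof -
    have "x \<noteq> y"
      using polygonal_knot_separated_edges_disjoint[OF K assms(2-4)] x y by blast
    moreover have "x \<in> knot_set n v" "y \<in> knot_set n v"
      unfolding knot_set_def using x y \<open>a < n\<close> \<open>b < n\<close> by auto
    ultimately have "(x, y) \<in> DC n v" unfolding DC_def using that by simp
    then show ?thesis by (intro MD_lower_bound_le_dcsd dcsd_le_dist)
  qed
  ultimately show ?thesis by (auto simp: dist_commute)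
qed

theorem corollary3p7:
  fixes n :: nat and v :: "nat \<Rightarrow> real ^ 3"
  assumes "polygonal_knot n v"
  shows "MD n v \<ge> min (2 * thickness_R n v) (ereal (MinEdge n v))"
  unfolding MD_eq_INF_separated_pairs
proof (rule INF_greatest)
  fix p assume "p \<in> separated_pairs n v"
  then have "separated_pairs n v \<noteq> {}" by auto
  moreover have "continuous_on (separated_pairs n v) (\<lambda>p. dist (fst p) (snd p))"
    by (intro continuous_intros)
  ultimately obtain q where "q \<in> separated_pairs n v"
    and closest: "\<forall>p \<in> separated_pairs n v. dist (fst q) (snd q) \<le> dist (fst p) (snd p)"
    using continuous_attains_inf[OF compact_separated_pairs] by blast
  then obtain a b where "a < n" "b < n" "separated_edges n a b" "fst q \<in> edge n v a" "snd q \<in> edge n v b"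
    unfolding separated_pairs_def by auto
  then have "MD_lower_bound n v \<le> ereal (dist (fst q) (snd q))"
    using MD_lower_bound_le_closest_pair[OF assms] closest by blast
  also have "\<dots> \<le> ereal (dist (fst p) (snd p))"
    using closest \<open>p \<in> separated_pairs n v\<close> by simp
  finally show "MD_lower_bound n v \<le> ereal (dist (fst p) (snd p))" .
qed

end
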